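(* Let $V$ be a real vector space and $C$ a convex cone in $V$ with $0\in C$. Suppose $X$ and $Y$ are disjoint $C$-antichain-convex subsets of $V$. (1) If $X$ is $C$-upward, then $\operatorname{co}(X)\cap\operatorname{co}(Y)=\emptyset$. (2) If $X$ is $C$-downward, then $\operatorname{co}(X)\cap\operatorname{co}(Y)=\emptyset$.
   Context: A cone in $V$ is a subset $C$ with $\lambda C\subseteq C$ for all $\lambda>0$. $S\subseteq V$ is $C$-antichain-convex iff for all $x,y\in S$ and $\lambda\in[0,1]$ with $y-x\notin C\cup(-C)$ one has $\lambda x+(1-\lambda)y\in S$. $S$ is $C$-upward iff $S+C\subseteq S$; $C$-downward iff $S-C\subseteq S$. $\operatorname{co}$ denotes convex hull. *)

theory Defs
  imports "HOL-Analysis.Analysis"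
begin

definition pos_cone :: "'a::real_vector set \<Rightarrow> bool" where
  "pos_cone C \<longleftrightarrow> (\<forall>t::real. t > 0 \<longrightarrow> (\<lambda>c. t *\<^sub>R c) ` C \<subseteq> C)"

definition antichain_convex :: "'a::real_vector set \<Rightarrow> 'a set \<Rightarrow> bool" where
  "antichain_convex C S \<longleftrightarrow>
     (\<forall>x\<in>S. \<forall>y\<in>S. \<forall>t::real. 0 \<le> t \<and> t \<le> 1 \<and> y - x \<notin> C \<union> uminus ` C
        \<longrightarrow> t *\<^sub>R x + (1 - t) *\<^sub>R y \<in> S)"

definition upward :: "'a::real_vector set \<Rightarrow> 'a set \<Rightarrow> bool" where
  "upward C S \<longleftrightarrow> (\<Union>s\<in>S. \<Union>c\<in>C. {s + c}) \<subseteq> S"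

definition downward :: "'a::real_vector set \<Rightarrow> 'a set \<Rightarrow> bool" where
  "downward C S \<longleftrightarrow> (\<Union>s\<in>S. \<Union>c\<in>C. {s - c}) \<subseteq> S"

end

theory Submission
  imports Defs
begin

text \<open>For an antichain-convex set \<open>S\<close> the Minkowski sum \<open>S + C\<close> is convex: a segment between
  comparable points of \<open>S\<close> is a translate of a segment along the cone, and a segment between
  incomparable points stays in \<open>S\<close>. An upward set \<open>X\<close> equals \<open>X + C\<close> and is thus convex,
  while \<open>co(Y)\<close> lies in the convex set \<open>Y - C\<close>, which misses \<open>X\<close> because \<open>X\<close> is upward and
  disjoint from \<open>Y\<close>. The downward case is the upward case for the cone \<open>-C\<close>.\<close>

lemma convex_cone_if_pos_cone:
  assumes "pos_cone C" "convex C" "0 \<in> C"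
  shows "convex_cone C"
  unfolding convex_cone_def conic_def
proof (intro conjI ballI allI impI)
  fix x and t :: real
  assume "x \<in> C" "0 \<le> t"
  then show "t *\<^sub>R x \<in> C"
    using assms unfolding pos_cone_def by (cases "t = 0") (auto simp: image_subset_iff)
qed (use assms in auto)

lemma antichain_convex_uminus_cone [simp]:
  "antichain_convex (uminus ` C) S \<longleftrightarrow> antichain_convex C S"
proof -
  have "uminus ` C \<union> uminus ` uminus ` C = C \<union> uminus ` C"
    by (auto simp: image_image)
  then show ?thesis
    unfolding antichain_convex_def by simp
qed

lemma downward_iff_upward_uminus_cone: "downward C S \<longleftrightarrow> upward (uminus ` C) S"
  unfolding upward_def downward_def by auto

lemma upward_set_plus_cone_eq:
  assumes "upward C S" "0 \<in> C"
  shows "S + C = S"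
  using assms unfolding upward_def set_plus_def by force

lemma convex_combination_in_set_plus_cone:
  assumes "convex_cone C" "x \<in> S" "y - x \<in> C" "c \<in> C" "d \<in> C"
    and "0 \<le> u" "0 \<le> v" "u + v = 1"
  shows "u *\<^sub>R (x + c) + v *\<^sub>R (y + d) \<in> S + C"
proof -
  have "u *\<^sub>R (x + c) + v *\<^sub>R (y + d) = (u + v) *\<^sub>R x + (v *\<^sub>R (y - x) + u *\<^sub>R c + v *\<^sub>R d)"
    by (simp add: algebra_simps)
  then have "u *\<^sub>R (x + c) + v *\<^sub>R (y + d) = x + (v *\<^sub>R (y - x) + u *\<^sub>R c + v *\<^sub>R d)"
    using \<open>u + v = 1\<close> by simp
  moreover have "v *\<^sub>R (y - x) + u *\<^sub>R c + v *\<^sub>R d \<in> C"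
    using assms by (intro convex_cone_add convex_cone_scaleR) auto
  ultimately show ?thesis
    using \<open>x \<in> S\<close> by auto
qed

lemma convex_set_plus_cone_if_antichain_convex:
  assumes "convex_cone C" "antichain_convex C S"
  shows "convex (S + C)"
  unfolding convex_def
proof (intro ballI allI impI)
  fix a b and u v :: real
  assume "a \<in> S + C" "b \<in> S + C" and u: "0 \<le> u" and v: "0 \<le> v" and uv: "u + v = 1"
  then obtain x y c d where a: "a = x + c" and b: "b = y + d"
    and xy: "x \<in> S" "y \<in> S" and cd: "c \<in> C" "d \<in> C"
    by (auto elim!: set_plus_elim)
  have "x - y \<in> C" if "y - x \<in> uminus ` C"
    using that by (metis imageE minus_diff_eq minus_minus)
  then consider "y - x \<in> C" | "x - y \<in> C" | "y - x \<notin> C \<union> uminus ` C"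
    by blast
  then show "u *\<^sub>R a + v *\<^sub>R b \<in> S + C"
  proof cases
    case 1
    then show ?thesis
      unfolding a b using convex_combination_in_set_plus_cone assms(1) xy cd u v uv by blast
  next
    case 2
    have "v *\<^sub>R (y + d) + u *\<^sub>R (x + c) \<in> S + C"
      using uv by (intro convex_combination_in_set_plus_cone[OF assms(1) xy(2) 2 cd(2,1) v u]) simp
    then show ?thesis
      unfolding a b by (simp add: add.commute)
  next
    case 3
    have "v = 1 - u"
      using uv by simp
    then have "u *\<^sub>R x + v *\<^sub>R y \<in> S"
      using 3 assms(2) xy u v unfolding antichain_convex_def by simp
    moreover have "u *\<^sub>R c + v *\<^sub>R d \<in> C"
      using assms(1) cd u v by (intro convex_cone_add convex_cone_scaleR) auto
    moreover have "u *\<^sub>R a + v *\<^sub>R b = (u *\<^sub>R x + v *\<^sub>R y) + (u *\<^sub>R c + v *\<^sub>R d)"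
      unfolding a b by (simp add: algebra_simps)
    ultimately show ?thesis
      by auto
  qed
qed

lemma convex_if_upward_antichain_convex:
  assumes "convex_cone C" "antichain_convex C S" "upward C S"
  shows "convex S"
  using convex_set_plus_cone_if_antichain_convex[OF assms(1,2)]
    upward_set_plus_cone_eq[OF assms(3) convex_cone_contains_0[OF assms(1)]]
  by simp

lemma convex_hulls_disjoint_if_upward:
  assumes "convex_cone C" "X \<inter> Y = {}"
    and "antichain_convex C X" "antichain_convex C Y" "upward C X"
  shows "convex hull X \<inter> convex hull Y = {}"
proof -
  let ?Z = "Y + uminus ` C"
  have "convex hull X = X"
    using convex_if_upward_antichain_convex[OF assms(1,3,5)] by (simp add: convex_hull_eq)
  moreover have "convex hull Y \<subseteq> ?Z"
  proof (rule hull_minimal)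
    show "Y \<subseteq> ?Z"
      using set_plus_intro[where b = 0] convex_cone_contains_0[OF assms(1)] by force
    show "convex ?Z"
      using assms(1,4) by (simp add: convex_set_plus_cone_if_antichain_convex convex_cone_negations)
  qed
  moreover have "X \<inter> ?Z = {}"
  proof -
    have "y \<in> X" if "y - c \<in> X" "c \<in> C" for y c
      using assms(5) that unfolding upward_def by force
    then show ?thesis
      using assms(2) by (fastforce elim!: set_plus_elim)
  qed
  ultimately show ?thesis
    by blast
qed

theorem lemma7:
  fixes C X Y :: "'a::real_vector set"
  assumes "pos_cone C" and "convex C" and "0 \<in> C"
    and "X \<inter> Y = {}"
    and "antichain_convex C X" and "antichain_convex C Y"
  shows "(upward C X \<longrightarrow> convex hull X \<inter> convex hull Y = {})
       \<and> (downward C X \<longrightarrow> convex hull X \<inter> convex hull Y = {})"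
proof -
  have C: "convex_cone C"
    using assms(1-3) by (rule convex_cone_if_pos_cone)
  have "upward C X \<Longrightarrow> convex hull X \<inter> convex hull Y = {}"
    using convex_hulls_disjoint_if_upward[OF C assms(4-6)] .
  moreover have "downward C X \<Longrightarrow> convex hull X \<inter> convex hull Y = {}"
    using convex_hulls_disjoint_if_upward[OF convex_cone_negations[OF C] assms(4)] assms(5,6)
    by (simp add: downward_iff_upward_uminus_cone)
  ultimately show ?thesis
    by blast
qed

end
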